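(* Let $L$ be an $R_0$-algebra and $k\in[0,1)$. Every $(\in,\in\vee q_k)$-fuzzy fated filter $\mu$ of $L$ satisfies, for all $x,y,z\in L$: (1) $\mu(x\to z)\ge\min\{\mu(x\to(y\to z)),\mu(x\to y),\tfrac{1-k}{2}\}$; (2) $\mu(x)\ge\min\{\mu((x\to y)\to x),\tfrac{1-k}{2}\}$.
   Context: An $R_0$-algebra is a bounded distributive lattice $(L,\wedge,\vee,0,1)$ with an order-reversing involution $\neg$ and a binary operation $\to$ such that for all $x,y,z\in L$: $x\to y=\neg y\to\neg x$; $1\to x=x$; $(y\to z)\wedge((x\to y)\to(x\to z))=y\to z$; $x\to(y\to z)=y\to(x\to z)$; $x\to(y\vee z)=(x\to y)\vee(x\to z)$; $(x\to y)\vee((x\to y)\to(\neg x\vee y))=1$. For $x\in L$, $t\in(0,1]$ and a fuzzy subset $\mu:L\to[0,1]$: $x_t\in\mu$ iff $\mu(x)\ge t$; $x_t\,q_k\,\mu$ iff $\mu(x)+t+k>1$; $x_t\in\vee q_k\,\mu$ iff $x_t\in\mu$ or $x_t\,q_k\,\mu$. $\mu$ is an $(\in,\in\vee q_k)$-fuzzy fated filter of $L$ if (i) for all $x\in L$, $t\in(0,1]$: $x_t\in\mu\Rightarrow 1_t\in\vee q_k\,\mu$; and (ii) for all $x,a,y\in L$, $t,s\in(0,1]$: if $(a\to((x\to y)\to x))_t\in\mu$ and $a_s\in\mu$ then $x_{\min\{t,s\}}\in\vee q_k\,\mu$. *)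

theory Defs
  imports Complex_Main
begin

text \<open>An R0-algebra on a carrier set L with meet, join, 0, 1, negation and implication.
  The lattice order is x \<le> y iff x \<and> y = x.\<close>

definition bdl :: "'a set \<Rightarrow> ('a \<Rightarrow> 'a \<Rightarrow> 'a) \<Rightarrow> ('a \<Rightarrow> 'a \<Rightarrow> 'a) \<Rightarrow> 'a \<Rightarrow> 'a \<Rightarrow> bool" where
  "bdl L mt jn zero one \<longleftrightarrow>
     zero \<in> L \<and> one \<in> L \<and>
     (\<forall>x\<in>L. \<forall>y\<in>L. mt x y \<in> L \<and> jn x y \<in> L) \<and>
     (\<forall>x\<in>L. \<forall>y\<in>L. mt x y = mt y x \<and> jn x y = jn y x) \<and>
     (\<forall>x\<in>L. \<forall>y\<in>L. \<forall>w\<in>L. mt (mt x y) w = mt x (mt y w) \<and> jn (jn x y) w = jn x (jn y w)) \<and>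
     (\<forall>x\<in>L. \<forall>y\<in>L. mt x (jn x y) = x \<and> jn x (mt x y) = x) \<and>
     (\<forall>x\<in>L. \<forall>y\<in>L. \<forall>w\<in>L. mt x (jn y w) = jn (mt x y) (mt x w)) \<and>
     (\<forall>x\<in>L. jn x zero = x \<and> mt x one = x)"

definition R0_algebra ::
  "'a set \<Rightarrow> ('a \<Rightarrow> 'a \<Rightarrow> 'a) \<Rightarrow> ('a \<Rightarrow> 'a \<Rightarrow> 'a) \<Rightarrow> 'a \<Rightarrow> 'a \<Rightarrow> ('a \<Rightarrow> 'a) \<Rightarrow> ('a \<Rightarrow> 'a \<Rightarrow> 'a) \<Rightarrow> bool" where
  "R0_algebra L mt jn zero one ng imp \<longleftrightarrow>
     bdl L mt jn zero one \<and>
     (\<forall>x\<in>L. ng x \<in> L \<and> ng (ng x) = x) \<and>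
     (\<forall>x\<in>L. \<forall>y\<in>L. mt x y = x \<longrightarrow> mt (ng y) (ng x) = ng y) \<and>
     (\<forall>x\<in>L. \<forall>y\<in>L. imp x y \<in> L) \<and>
     (\<forall>x\<in>L. \<forall>y\<in>L. imp x y = imp (ng y) (ng x)) \<and>
     (\<forall>x\<in>L. imp one x = x) \<and>
     (\<forall>x\<in>L. \<forall>y\<in>L. \<forall>w\<in>L. mt (imp y w) (imp (imp x y) (imp x w)) = imp y w) \<and>
     (\<forall>x\<in>L. \<forall>y\<in>L. \<forall>w\<in>L. imp x (imp y w) = imp y (imp x w)) \<and>
     (\<forall>x\<in>L. \<forall>y\<in>L. \<forall>w\<in>L. imp x (jn y w) = jn (imp x y) (imp x w)) \<and>
     (\<forall>x\<in>L. \<forall>y\<in>L. jn (imp x y) (imp (imp x y) (jn (ng x) y)) = one)"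

definition fbelongs :: "('a \<Rightarrow> real) \<Rightarrow> 'a \<Rightarrow> real \<Rightarrow> bool" where
  "fbelongs \<mu> x t \<longleftrightarrow> \<mu> x \<ge> t"

definition fquasi :: "real \<Rightarrow> ('a \<Rightarrow> real) \<Rightarrow> 'a \<Rightarrow> real \<Rightarrow> bool" where
  "fquasi k \<mu> x t \<longleftrightarrow> \<mu> x + t + k > 1"

definition fbelongs_or_quasi :: "real \<Rightarrow> ('a \<Rightarrow> real) \<Rightarrow> 'a \<Rightarrow> real \<Rightarrow> bool" where
  "fbelongs_or_quasi k \<mu> x t \<longleftrightarrow> fbelongs \<mu> x t \<or> fquasi k \<mu> x t"

definition fuzzy_subset :: "'a set \<Rightarrow> ('a \<Rightarrow> real) \<Rightarrow> bool" where
  "fuzzy_subset L \<mu> \<longleftrightarrow> (\<forall>x\<in>L. 0 \<le> \<mu> x \<and> \<mu> x \<le> 1)"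

definition in_inq_fuzzy_fated_filter ::
  "real \<Rightarrow> 'a set \<Rightarrow> 'a \<Rightarrow> ('a \<Rightarrow> 'a \<Rightarrow> 'a) \<Rightarrow> ('a \<Rightarrow> real) \<Rightarrow> bool" where
  "in_inq_fuzzy_fated_filter k L one imp \<mu> \<longleftrightarrow>
     fuzzy_subset L \<mu> \<and>
     (\<forall>x\<in>L. \<forall>t. 0 < t \<and> t \<le> 1 \<longrightarrow> fbelongs \<mu> x t \<longrightarrow> fbelongs_or_quasi k \<mu> one t) \<and>
     (\<forall>x\<in>L. \<forall>a\<in>L. \<forall>y\<in>L. \<forall>t s. 0 < t \<and> t \<le> 1 \<and> 0 < s \<and> s \<le> 1 \<longrightarrow>
        fbelongs \<mu> (imp a (imp (imp x y) x)) t \<longrightarrow> fbelongs \<mu> a s \<longrightarrow>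
        fbelongs_or_quasi k \<mu> x (min t s))"

end

theory Submission
  imports Defs
begin

text \<open>For levels t \<le> (1 - k)/2 the condition x_t \<in>\<or>q_k \<mu> collapses to x_t \<in> \<mu>, because
  \<mu> x + t + k > 1 then forces \<mu> x > t. So at such levels a fated filter behaves like a crisp
  fated filter: it contains 1, is closed under modus ponens and under x \<to> y = 1, and satisfies
  the fated rule with a = 1. Both inequalities are then crisp R0-algebra arguments; the first uses
  x \<to> (x \<to> z) \<le> ((x \<to> z) \<to> z) \<to> (x \<to> z), whose right side is the premise of the fated rule.\<close>

lemma fbelongs_or_quasi_imp_fbelongs:
  assumes "t \<le> (1 - k) / 2" and "fbelongs_or_quasi k \<mu> x t"
  shows "fbelongs \<mu> x t"
  using assms unfolding fbelongs_or_quasi_def fbelongs_def fquasi_def by auto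

lemma min_le_if_levels_le:
  fixes v m c :: real
  assumes "0 \<le> v" and "\<And>t. 0 < t \<Longrightarrow> t \<le> c \<Longrightarrow> t \<le> m \<Longrightarrow> t \<le> v"
  shows "min m c \<le> v"
proof (cases "min m c \<le> 0")
  case True
  then show ?thesis
    using assms(1) by linarith
next
  case False
  then show ?thesis
    using assms(2)[of "min m c"] by simp
qed

locale r0_algebra =
  fixes L :: "'a set" and mt jn :: "'a \<Rightarrow> 'a \<Rightarrow> 'a" and zero one :: 'a
    and ng :: "'a \<Rightarrow> 'a" and imp :: "'a \<Rightarrow> 'a \<Rightarrow> 'a"
  assumes R0: "R0_algebra L mt jn zero one ng imp"
begin

lemma zero_closed: "zero \<in> L"
  using R0 unfolding R0_algebra_def bdl_def by (elim conjE) meson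

lemma one_closed: "one \<in> L"
  using R0 unfolding R0_algebra_def bdl_def by (elim conjE) meson

lemma ng_closed: "x \<in> L \<Longrightarrow> ng x \<in> L"
  using R0 unfolding R0_algebra_def bdl_def by (elim conjE) meson

lemma imp_closed: "x \<in> L \<Longrightarrow> y \<in> L \<Longrightarrow> imp x y \<in> L"
  using R0 unfolding R0_algebra_def bdl_def by (elim conjE) meson

lemma mt_commute: "x \<in> L \<Longrightarrow> y \<in> L \<Longrightarrow> mt x y = mt y x"
  using R0 unfolding R0_algebra_def bdl_def by (elim conjE) meson

lemma jn_commute: "x \<in> L \<Longrightarrow> y \<in> L \<Longrightarrow> jn x y = jn y x"
  using R0 unfolding R0_algebra_def bdl_def by (elim conjE) meson

lemma mt_jn_absorb: "x \<in> L \<Longrightarrow> y \<in> L \<Longrightarrow> mt x (jn x y) = x"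
  using R0 unfolding R0_algebra_def bdl_def by (elim conjE) meson

lemma jn_mt_absorb: "x \<in> L \<Longrightarrow> y \<in> L \<Longrightarrow> jn x (mt x y) = x"
  using R0 unfolding R0_algebra_def bdl_def by (elim conjE) meson

lemma jn_zero: "x \<in> L \<Longrightarrow> jn x zero = x"
  using R0 unfolding R0_algebra_def bdl_def by (elim conjE) meson

lemma mt_one: "x \<in> L \<Longrightarrow> mt x one = x"
  using R0 unfolding R0_algebra_def bdl_def by (elim conjE) meson

lemma ng_ng: "x \<in> L \<Longrightarrow> ng (ng x) = x"
  using R0 unfolding R0_algebra_def bdl_def by (elim conjE) meson

lemma ng_antitone: "x \<in> L \<Longrightarrow> y \<in> L \<Longrightarrow> mt x y = x \<Longrightarrow> mt (ng y) (ng x) = ng y"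
  using R0 unfolding R0_algebra_def bdl_def by (elim conjE) meson

lemma imp_contrapos: "x \<in> L \<Longrightarrow> y \<in> L \<Longrightarrow> imp x y = imp (ng y) (ng x)"
  using R0 unfolding R0_algebra_def bdl_def by (elim conjE) meson

lemma imp_one_left: "x \<in> L \<Longrightarrow> imp one x = x"
  using R0 unfolding R0_algebra_def bdl_def by (elim conjE) meson

lemma imp_le_imp_prefix: "x \<in> L \<Longrightarrow> y \<in> L \<Longrightarrow> z \<in> L \<Longrightarrow>
    mt (imp y z) (imp (imp x y) (imp x z)) = imp y z"
  using R0 unfolding R0_algebra_def bdl_def by (elim conjE) meson

lemma imp_exchange: "x \<in> L \<Longrightarrow> y \<in> L \<Longrightarrow> z \<in> L \<Longrightarrow> imp x (imp y z) = imp y (imp x z)"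
  using R0 unfolding R0_algebra_def bdl_def by (elim conjE) meson

lemma imp_jn_distrib: "x \<in> L \<Longrightarrow> y \<in> L \<Longrightarrow> z \<in> L \<Longrightarrow> imp x (jn y z) = jn (imp x y) (imp x z)"
  using R0 unfolding R0_algebra_def bdl_def by (elim conjE) meson

lemma one_le_imp_eq_one:
  assumes "x \<in> L" and "mt one x = one"
  shows "x = one"
  using assms mt_commute[OF one_closed assms(1)] mt_one[OF assms(1)] by simp

lemma ng_zero: "ng zero = one"
proof -
  have "jn zero (ng one) = ng one"
    using jn_commute[OF zero_closed ng_closed[OF one_closed]] jn_zero[OF ng_closed[OF one_closed]]
    by simp
  then have "mt zero (ng one) = zero"
    using mt_jn_absorb[OF zero_closed ng_closed[OF one_closed]] by simp
  then have "mt one (ng zero) = one"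
    using ng_antitone[OF zero_closed ng_closed[OF one_closed]] ng_ng[OF one_closed] by simp
  then show ?thesis
    using one_le_imp_eq_one ng_closed[OF zero_closed] by blast
qed

lemma imp_self: "x \<in> L \<Longrightarrow> imp x x = one"
proof -
  assume x: "x \<in> L"
  have zero_zero: "imp zero zero = one"
    using imp_contrapos[OF zero_closed zero_closed] ng_zero imp_one_left[OF one_closed] by simp
  have "imp (ng x) zero = x"
    using imp_contrapos[OF ng_closed[OF x] zero_closed] ng_zero ng_ng[OF x]
      imp_one_left[OF ng_closed[OF ng_closed[OF x]]] by simp
  then have "mt one (imp x x) = one"
    using imp_le_imp_prefix[OF ng_closed[OF x] zero_closed zero_closed] zero_zero by simp
  then show ?thesis
    using one_le_imp_eq_one imp_closed[OF x x] by blast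
qed

lemma imp_eq_one_if_le:
  assumes x: "x \<in> L" and y: "y \<in> L" and le: "mt x y = x"
  shows "imp x y = one"
proof -
  have "jn x y = y"
    using jn_mt_absorb[OF y x] mt_commute[OF x y] jn_commute[OF x y] le by simp
  then have "imp x y = jn (imp x x) (imp x y)"
    using imp_jn_distrib[OF x x y] by simp
  also have "\<dots> = jn one (imp x y)"
    using imp_self[OF x] by simp
  also have "\<dots> = one"
    using jn_mt_absorb[OF one_closed imp_closed[OF x y]]
      mt_commute[OF one_closed imp_closed[OF x y]] mt_one[OF imp_closed[OF x y]] by simp
  finally show ?thesis .
qed

lemma imp_prefix:
  "x \<in> L \<Longrightarrow> y \<in> L \<Longrightarrow> z \<in> L \<Longrightarrow> imp (imp y z) (imp (imp x y) (imp x z)) = one"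
  by (simp add: imp_closed imp_eq_one_if_le imp_le_imp_prefix)

lemma imp_mono_right:
  assumes "x \<in> L" and "y \<in> L" and "z \<in> L" and "imp y z = one"
  shows "imp (imp x y) (imp x z) = one"
proof -
  have "imp one (imp (imp x y) (imp x z)) = one"
    using imp_prefix[OF assms(1-3)] assms(4) by simp
  then show ?thesis
    using imp_one_left imp_closed assms(1-3) by simp
qed

lemma imp_imp_self_le_peirce:
  assumes x: "x \<in> L" and z: "z \<in> L"
  shows "imp (imp x (imp x z)) (imp (imp (imp x z) z) (imp x z)) = one"
proof -
  have xz: "imp x z \<in> L" and xzz: "imp (imp x z) z \<in> L"
    using imp_closed x z by blast+
  have "imp (imp x z) (imp (imp (imp x z) z) z) = one"
    using imp_exchange[OF xz xzz z] imp_self[OF xzz] by simp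
  then have "imp (imp x (imp x z)) (imp x (imp (imp (imp x z) z) z)) = one"
    using imp_mono_right[OF x xz] imp_closed xzz z by blast
  then show ?thesis
    using imp_exchange[OF x xzz z] by simp
qed

end

locale fated_filter = r0_algebra +
  fixes k :: real and \<mu> :: "'a \<Rightarrow> real"
  assumes k_nonneg: "0 \<le> k"
    and filter: "in_inq_fuzzy_fated_filter k L one imp \<mu>"
begin

lemma nonneg: "x \<in> L \<Longrightarrow> 0 \<le> \<mu> x"
  using filter unfolding in_inq_fuzzy_fated_filter_def fuzzy_subset_def by blast

lemma one_or_quasi:
  "x \<in> L \<Longrightarrow> 0 < t \<Longrightarrow> t \<le> 1 \<Longrightarrow> fbelongs \<mu> x t \<Longrightarrow> fbelongs_or_quasi k \<mu> one t"
  using filter unfolding in_inq_fuzzy_fated_filter_def by blast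

lemma fated_or_quasi:
  "x \<in> L \<Longrightarrow> a \<in> L \<Longrightarrow> y \<in> L \<Longrightarrow> 0 < t \<Longrightarrow> t \<le> 1 \<Longrightarrow> 0 < s \<Longrightarrow> s \<le> 1 \<Longrightarrow>
    fbelongs \<mu> (imp a (imp (imp x y) x)) t \<Longrightarrow> fbelongs \<mu> a s \<Longrightarrow>
    fbelongs_or_quasi k \<mu> x (min t s)"
  using filter unfolding in_inq_fuzzy_fated_filter_def by blast

context
  fixes t :: real
  assumes t_pos: "0 < t" and t_le: "t \<le> (1 - k) / 2"
begin

lemma level_le_one: "t \<le> 1"
  using t_le k_nonneg by (simp add: field_simps)

lemma level_one:
  assumes "x \<in> L" and "t \<le> \<mu> x"
  shows "t \<le> \<mu> one"
proof -
  have "fbelongs_or_quasi k \<mu> one t"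
    using one_or_quasi[OF assms(1) t_pos level_le_one] assms(2) unfolding fbelongs_def .
  then show ?thesis
    by (rule fbelongs_or_quasi_imp_fbelongs[OF t_le, unfolded fbelongs_def])
qed

lemma level_fated:
  assumes "x \<in> L" and "a \<in> L" and "y \<in> L"
    and "t \<le> \<mu> (imp a (imp (imp x y) x))" and "t \<le> \<mu> a"
  shows "t \<le> \<mu> x"
proof -
  have "fbelongs_or_quasi k \<mu> x (min t t)"
    using fated_or_quasi[OF assms(1-3) t_pos level_le_one t_pos level_le_one] assms(4,5)
    unfolding fbelongs_def .
  then show ?thesis
    using fbelongs_or_quasi_imp_fbelongs[OF t_le] unfolding fbelongs_def by simp
qed

lemma level_mp:
  assumes a: "a \<in> L" and b: "b \<in> L" and "t \<le> \<mu> (imp a b)" and "t \<le> \<mu> a"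
  shows "t \<le> \<mu> b"
proof -
  have "imp (imp b b) b = b"
    using imp_self[OF b] imp_one_left[OF b] by simp
  then have "t \<le> \<mu> (imp a (imp (imp b b) b))"
    using assms(3) by simp
  then show ?thesis
    using level_fated[OF b a b] assms(4) by blast
qed

lemma level_mono:
  assumes "a \<in> L" and "b \<in> L" and "imp a b = one" and "t \<le> \<mu> a"
  shows "t \<le> \<mu> b"
  using level_mp[OF assms(1,2)] level_one[OF assms(1,4)] assms(3,4) by simp

lemma level_imp_trans:
  assumes x: "x \<in> L" and y: "y \<in> L" and z: "z \<in> L"
    and xyz: "t \<le> \<mu> (imp x (imp y z))" and xy: "t \<le> \<mu> (imp x y)"
  shows "t \<le> \<mu> (imp x z)"
proof -
  have xz: "imp x z \<in> L" and xxz: "imp x (imp x z) \<in> L" and xzz: "imp (imp x z) z \<in> L"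
    using imp_closed x z by blast+
  have "t \<le> \<mu> (imp y (imp x z))"
    using xyz imp_exchange[OF x y z] by simp
  then have "t \<le> \<mu> (imp (imp x y) (imp x (imp x z)))"
    using level_mono[OF _ _ imp_prefix[OF x y xz]] imp_closed x y xz xxz by blast
  then have le_xxz: "t \<le> \<mu> (imp x (imp x z))"
    using level_mp[OF imp_closed[OF x y] xxz] xy by blast
  then have "t \<le> \<mu> (imp (imp (imp x z) z) (imp x z))"
    using level_mono[OF xxz imp_closed[OF xzz xz] imp_imp_self_le_peirce[OF x z]] by blast
  moreover have "t \<le> \<mu> one"
    using level_one[OF xxz le_xxz] .
  ultimately show ?thesis
    using level_fated[OF xz one_closed z] imp_one_left[OF imp_closed[OF xzz xz]] by simp
qed

lemma level_peirce:
  assumes x: "x \<in> L" and y: "y \<in> L" and "t \<le> \<mu> (imp (imp x y) x)"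
  shows "t \<le> \<mu> x"
proof -
  have "t \<le> \<mu> one"
    using level_one[OF imp_closed[OF imp_closed[OF x y] x] assms(3)] .
  then show ?thesis
    using level_fated[OF x one_closed y] assms(3) imp_one_left[OF imp_closed[OF imp_closed[OF x y] x]]
    by simp
qed

end

end

theorem proposition3p16:
  fixes L :: "'a set" and mt jn imp :: "'a \<Rightarrow> 'a \<Rightarrow> 'a" and zero one :: 'a
    and ng :: "'a \<Rightarrow> 'a" and \<mu> :: "'a \<Rightarrow> real" and k :: real
  assumes "R0_algebra L mt jn zero one ng imp"
    and "0 \<le> k" and "k < 1"
    and "in_inq_fuzzy_fated_filter k L one imp \<mu>"
  shows "(\<forall>x\<in>L. \<forall>y\<in>L. \<forall>w\<in>L.
           \<mu> (imp x w) \<ge> min (min (\<mu> (imp x (imp y w))) (\<mu> (imp x y))) ((1 - k) / 2)) \<and>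
         (\<forall>x\<in>L. \<forall>y\<in>L. \<mu> x \<ge> min (\<mu> (imp (imp x y) x)) ((1 - k) / 2))"
proof -
  interpret fated_filter L mt jn zero one ng imp k \<mu>
    using assms(1,2,4) by unfold_locales
  have "min (min (\<mu> (imp x (imp y w))) (\<mu> (imp x y))) ((1 - k) / 2) \<le> \<mu> (imp x w)"
    if "x \<in> L" "y \<in> L" "w \<in> L" for x y w
    using that by (intro min_le_if_levels_le) (auto intro: level_imp_trans nonneg imp_closed)
  moreover have "min (\<mu> (imp (imp x y) x)) ((1 - k) / 2) \<le> \<mu> x"
    if "x \<in> L" "y \<in> L" for x y
    using that by (intro min_le_if_levels_le) (auto intro: level_peirce nonneg)
  ultimately show ?thesis
    by blast
qed

end
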